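(* Let $\widehat{\mathbf M}\otimes\mathcal A_\psi$ be the product of a gMDP $\widehat{\mathbf M}$ (state space $\hat{\mathbb X}$, input space $\hat{\mathbb U}$) with the DFA $\mathcal A_\psi=(Q,q_0,\Sigma,F,\tau)$, let $\delta\ge 0$, and let $\mu:\hat{\mathbb X}\times Q\to\mathcal P(\hat{\mathbb U})$ be any universally measurable map. Then: (i) $\mathbf T^\mu_\delta$ is monotone: if $V(\hat x,q)\ge W(\hat x,q)$ for all $(\hat x,q)\in\hat{\mathbb X}\times Q$, then $\mathbf T^\mu_\delta(V)(\hat x,q)\ge\mathbf T^\mu_\delta(W)(\hat x,q)$ for all $(\hat x,q)$; (ii) with $V_0=0$, the sequence $\{(\mathbf T^\mu_\delta)^l(V_0)\}_{l\ge0}$ is monotonically increasing and converges pointwise; (iii) if $\delta>0$, the fixed-point equation $V=\mathbf T^\mu_\delta(V)$ (for functions $V:\hat{\mathbb X}\times Q\to[0,1]$) has a unique solution, namely $V^\mu_\infty:=\lim_{l\to\infty}(\mathbf T^\mu_\delta)^l(V_0)$ with $V_0=0$.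
   Context: A gMDP is a tuple $\widehat{\mathbf M}=(\hat{\mathbb X},\hat{\mathbb U},\mathbb Y,\hat x_0,\hat{\mathbf t},\hat h)$ with Polish state space $\hat{\mathbb X}$, Polish input space $\hat{\mathbb U}$, metric output space $(\mathbb Y,\mathbf d_{\mathbb Y})$, initial state $\hat x_0$, stochastic kernel $\hat{\mathbf t}(\cdot\mid\hat x,\hat u)$ on $\hat{\mathbb X}$, and measurable output map $\hat h:\hat{\mathbb X}\to\mathbb Y$. $\mathsf{AP}$ is a finite set of atomic propositions, $\Sigma=2^{\mathsf{AP}}$, $\mathsf L:\mathbb Y\to\Sigma$ a measurable labelling function; $\psi$ is an scLTL formula and $\mathcal A_\psi=(Q,q_0,\Sigma,F,\tau)$ a deterministic finite automaton (finite $Q$, accepting set $F\subseteq Q$, transition function $\tau:Q\times\Sigma\to Q$) accepting exactly the words satisfying $\psi$. The product $\widehat{\mathbf M}\otimes\mathcal A_\psi$ is the gMDP with states $\hat{\mathbb X}\times Q$, inputs $\hat{\mathbb U}$, initial state $(\hat x_0,\tau(q_0,\mathsf L(\hat h(\hat x_0))))$ and kernel $\bar{\mathbf t}(d\hat x'\times\{q'\}\mid\hat x,q,u)=\mathbf 1_{\{q'\}}(\tau(q,\mathsf L(\hat h(\hat x'))))\,\hat{\mathbf t}(d\hat x'\mid\hat x,u)$. For $V:\hat{\mathbb X}\times Q\to[0,1]$, the Bellman operator is $\mathbf T^\mu(V)(\hat x,q)=\int\max\{\mathbf 1_F(q'),V(\hat x',q')\}\,\bar{\mathbf t}(d\hat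 x'\times\{q'\}\mid\hat x,q,\mu(\hat x,q))$ (input drawn from $\mu(\hat x,q)$), and the $\delta$-robust operator is $\mathbf T^\mu_\delta(V)(\hat x,q)=\mathbf L(\mathbf T^\mu(V)(\hat x,q)-\delta)$, where $\mathbf L(r)=\min(1,\max(0,r))$. *)

theory Defs
  imports "HOL-Probability.Probability"
begin

definition univ_measurable :: "'b measure \<Rightarrow> ('a::topological_space \<Rightarrow> 'b) \<Rightarrow> bool" where
  "univ_measurable N f \<longleftrightarrow>
     (\<forall>P::'a measure. prob_space P \<and> sets P = sets borel \<longrightarrow> f \<in> completion P \<rightarrow>\<^sub>M N)"

definition clip01 :: "real \<Rightarrow> real" where
  "clip01 r = min 1 (max 0 r)"

text \<open>The product kernel
  tbar(dx' x {q'} | x,q,u) = 1_{q'}(tau(q, L(h x'))) t(dx'|x,u) is written out: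
  integrating over (x',q') amounts to integrating over x' with q' = tau q (L (h x')).  Integrals are taken w.r.t. completed measures,
  since iterates are only universally measurable.\<close>
definition bellman ::
  "('x \<Rightarrow> 'u \<Rightarrow> 'x measure) \<Rightarrow> ('x \<Rightarrow> 'y) \<Rightarrow> ('y \<Rightarrow> 'ap set) \<Rightarrow>
   ('q \<Rightarrow> 'ap set \<Rightarrow> 'q) \<Rightarrow> 'q set \<Rightarrow> ('x \<times> 'q \<Rightarrow> 'u measure) \<Rightarrow>
   ('x \<times> 'q \<Rightarrow> real) \<Rightarrow> 'x \<times> 'q \<Rightarrow> real" where
  "bellman t h L \<tau> F \<mu> V = (\<lambda>(x, q). enn2real
     (\<integral>\<^sup>+ u. (\<integral>\<^sup>+ x'. ennreal (max (indicator F (\<tau> q (L (h x')))) (V (x', \<tau> q (L (h x')))))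
        \<partial>completion (t x u)) \<partial>completion (\<mu> (x, q))))"

definition robust_bellman ::
  "('x \<Rightarrow> 'u \<Rightarrow> 'x measure) \<Rightarrow> ('x \<Rightarrow> 'y) \<Rightarrow> ('y \<Rightarrow> 'ap set) \<Rightarrow>
   ('q \<Rightarrow> 'ap set \<Rightarrow> 'q) \<Rightarrow> 'q set \<Rightarrow> ('x \<times> 'q \<Rightarrow> 'u measure) \<Rightarrow> real \<Rightarrow>
   ('x \<times> 'q \<Rightarrow> real) \<Rightarrow> 'x \<times> 'q \<Rightarrow> real" where
  "robust_bellman t h L \<tau> F \<mu> \<delta> V = (\<lambda>s. clip01 (bellman t h L \<tau> F \<mu> V s - \<delta>))"

end

theory Submission
  imports Defs
begin

text \<open>
  Monotonicity of \<open>T\<^sub>\<delta>\<close> is inherited from the integral and from the clipping map, so the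
  iterates of \<open>T\<^sub>\<delta>\<close> on \<open>V\<^sub>0 = 0\<close> increase, stay in \<open>[0,1]\<close> and converge; by dominated
  convergence their limit \<open>V\<^sub>\<infinity>\<close> is a fixed point, and it lies below every fixed point in \<open>[0,1]\<close>.
  Universal measurability survives each iteration because integrating a universally measurable
  function against the completion of a measurable kernel agrees almost everywhere with a Borel
  integral.

  For uniqueness let \<open>V \<ge> V\<^sub>\<infinity>\<close> be another fixed point, \<open>d = sup (V - V\<^sub>\<infinity>) > 0\<close> and
  \<open>M = sup (V - V\<^sub>\<infinity> + d V) \<ge> d\<close>. Where \<open>V > 0\<close> the clipping is inactive for \<open>V\<close>, hence
  \<open>V - V\<^sub>\<infinity> + d V \<le> T(V) - T(V\<^sub>\<infinity>) + d T(V) - d \<delta>\<close>, and the integrand on the right is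
  pointwise at most \<open>M\<close> (at most \<open>d\<close> where the automaton accepts). So \<open>V - V\<^sub>\<infinity> + d V\<close> is
  everywhere at most \<open>max 0 (M - d \<delta>)\<close>, contradicting \<open>M \<ge> d > 0\<close>.
\<close>

lemma (in complete_measure) borel_measurable_AE_eq:
  fixes f g :: "'a \<Rightarrow> 'b::topological_space"
  assumes g: "g \<in> borel_measurable M" and ae: "AE x in M. f x = g x"
  shows "f \<in> borel_measurable M"
proof (rule measurableI)
  fix B :: "'b set" assume "B \<in> sets borel"
  with g have g_B: "g -` B \<inter> space M \<in> sets M" by (rule measurable_sets)
  have "AE x in M. x \<in> g -` B \<inter> space M \<longleftrightarrow> x \<in> f -` B \<inter> space M"
    using ae by (rule AE_mp) (auto intro!: AE_I2)
  from in_sets_AE[OF this g_B] show "f -` B \<inter> space M \<in> sets M" by blast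
qed auto

lemma univ_measurableD:
  "univ_measurable N f \<Longrightarrow> prob_space P \<Longrightarrow> sets P = sets borel \<Longrightarrow> f \<in> completion P \<rightarrow>\<^sub>M N"
  unfolding univ_measurable_def by blast

lemma univ_measurable_compose:
  assumes "univ_measurable N f" and "g \<in> N \<rightarrow>\<^sub>M K"
  shows "univ_measurable K (\<lambda>x. g (f x))"
  using assms unfolding univ_measurable_def by (blast intro: measurable_compose)

lemma nn_integral_completion_kernel_AE:
  fixes \<kappa> :: "'a \<Rightarrow> 'b::topological_space measure" and f :: "'b \<Rightarrow> ennreal"
  assumes A: "prob_space A" and \<kappa>: "\<kappa> \<in> A \<rightarrow>\<^sub>M prob_algebra borel"
    and f: "univ_measurable borel f"
  obtains g where "g \<in> borel_measurable borel"
    and "AE a in A. (\<integral>\<^sup>+ y. f y \<partial>completion (\<kappa> a)) = (\<integral>\<^sup>+ y. g y \<partial>\<kappa> a)"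
    and "(\<integral>\<^sup>+ y. f y \<partial>completion (A \<bind> \<kappa>)) = (\<integral>\<^sup>+ y. g y \<partial>(A \<bind> \<kappa>))"
proof -
  have A_space: "A \<in> space (prob_algebra A)"
    using A by (simp add: space_prob_algebra)
  define \<nu> where "\<nu> = A \<bind> \<kappa>"
  have \<nu>_prob: "prob_space \<nu>" unfolding \<nu>_def by (rule prob_space_bind'[OF A_space \<kappa>])
  have \<nu>_sets: "sets \<nu> = sets borel" unfolding \<nu>_def by (rule sets_bind'[OF A_space \<kappa>])
  have \<nu>_space: "space \<nu> = UNIV" using sets_eq_imp_space_eq[OF \<nu>_sets] by simp
  have \<kappa>_sub: "\<kappa> \<in> A \<rightarrow>\<^sub>M subprob_algebra borel"
    using \<kappa> by (rule measurable_prob_algebraD)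
  obtain g where g: "g \<in> borel_measurable \<nu>" and fg: "AE y in \<nu>. f y = g y"
    using completion_ex_borel_measurable univ_measurableD[OF f \<nu>_prob \<nu>_sets] by blast
  have g_borel: "g \<in> borel_measurable borel"
    using g \<nu>_sets by (simp cong: measurable_cong_sets)
  obtain N where N: "N \<in> null_sets \<nu>" "{y \<in> space \<nu>. f y \<noteq> g y} \<subseteq> N"
    using fg unfolding eventually_ae_filter by blast
  have "AE y in \<nu>. y \<notin> N" using N(1) by (rule AE_not_in)
  then have "AE a in A. AE y in \<kappa> a. y \<notin> N"
    unfolding \<nu>_def using AE_bind[OF \<kappa>_sub, of "\<lambda>y. y \<notin> N"] N(1) \<nu>_sets by auto
  then have "AE a in A. (\<integral>\<^sup>+ y. f y \<partial>completion (\<kappa> a)) = (\<integral>\<^sup>+ y. g y \<partial>\<kappa> a)"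
  proof eventually_elim
    case (elim a)
    then have "AE y in \<kappa> a. f y = g y"
      by (rule AE_mp) (use N \<nu>_space in \<open>auto intro!: AE_I2\<close>)
    then have "(\<integral>\<^sup>+ y. f y \<partial>completion (\<kappa> a)) = (\<integral>\<^sup>+ y. g y \<partial>completion (\<kappa> a))"
      by (intro nn_integral_cong_AE AE_completion)
    then show ?case by (simp add: nn_integral_completion)
  qed
  moreover have "(\<integral>\<^sup>+ y. f y \<partial>completion \<nu>) = (\<integral>\<^sup>+ y. g y \<partial>\<nu>)"
    using fg by (subst nn_integral_cong_AE[OF AE_completion]) (auto simp: nn_integral_completion)
  ultimately show thesis
    using that g_borel unfolding \<nu>_def by blast
qed

lemma nn_integral_completion_bind:
  fixes \<kappa> :: "'a \<Rightarrow> 'b::topological_space measure" and f :: "'b \<Rightarrow> ennreal"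
  assumes "prob_space A" and \<kappa>: "\<kappa> \<in> A \<rightarrow>\<^sub>M prob_algebra borel"
    and "univ_measurable borel f"
  shows "(\<integral>\<^sup>+ a. (\<integral>\<^sup>+ y. f y \<partial>completion (\<kappa> a)) \<partial>completion A)
    = (\<integral>\<^sup>+ y. f y \<partial>completion (A \<bind> \<kappa>))"
proof -
  obtain g where g: "g \<in> borel_measurable borel"
    and ae: "AE a in A. (\<integral>\<^sup>+ y. f y \<partial>completion (\<kappa> a)) = (\<integral>\<^sup>+ y. g y \<partial>\<kappa> a)"
    and bind: "(\<integral>\<^sup>+ y. f y \<partial>completion (A \<bind> \<kappa>)) = (\<integral>\<^sup>+ y. g y \<partial>(A \<bind> \<kappa>))"
    using nn_integral_completion_kernel_AE[OF assms] by blast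
  have "(\<integral>\<^sup>+ a. (\<integral>\<^sup>+ y. f y \<partial>completion (\<kappa> a)) \<partial>completion A)
      = (\<integral>\<^sup>+ a. (\<integral>\<^sup>+ y. g y \<partial>\<kappa> a) \<partial>A)"
    using ae by (subst nn_integral_cong_AE[OF AE_completion]) (auto simp: nn_integral_completion)
  also have "\<dots> = (\<integral>\<^sup>+ y. g y \<partial>(A \<bind> \<kappa>))"
    by (rule nn_integral_bind[OF g measurable_prob_algebraD[OF \<kappa>], symmetric])
  finally show ?thesis by (simp add: bind)
qed

lemma measurable_nn_integral_completion_kernel:
  fixes \<kappa> :: "'a \<Rightarrow> 'b::topological_space measure" and f :: "'b \<Rightarrow> ennreal"
  assumes "prob_space P" and \<kappa>: "\<kappa> \<in> completion P \<rightarrow>\<^sub>M prob_algebra borel"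
    and "univ_measurable borel f"
  shows "(\<lambda>a. \<integral>\<^sup>+ y. f y \<partial>completion (\<kappa> a)) \<in> borel_measurable (completion P)"
proof -
  obtain g where g: "g \<in> borel_measurable borel"
    and ae: "AE a in completion P. (\<integral>\<^sup>+ y. f y \<partial>completion (\<kappa> a)) = (\<integral>\<^sup>+ y. g y \<partial>\<kappa> a)"
    using nn_integral_completion_kernel_AE[OF prob_space.prob_space_completion \<kappa>] assms by blast
  have "(\<lambda>a. \<integral>\<^sup>+ y. g y \<partial>\<kappa> a) \<in> borel_measurable (completion P)"
    using measurable_prob_algebraD[OF \<kappa>] nn_integral_measurable_subprob_algebra[OF g]
    by (rule measurable_compose)
  then show ?thesis using ae by (rule completion.borel_measurable_AE_eq)
qed

lemma clip01_mono: "a \<le> b \<Longrightarrow> clip01 a \<le> clip01 b"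
  unfolding clip01_def by simp

lemma clip01_range: "clip01 a \<in> {0..1}"
  unfolding clip01_def by auto

lemma clip01_le: "0 < clip01 a \<Longrightarrow> clip01 a \<le> a"
  unfolding clip01_def by auto

lemma clip01_ge: "a \<le> 1 \<Longrightarrow> a \<le> clip01 a"
  unfolding clip01_def by auto

definition univ_measurable_value :: "('x::topological_space \<times> 'q \<Rightarrow> real) \<Rightarrow> bool" where
  "univ_measurable_value V \<longleftrightarrow> (\<forall>q. univ_measurable borel (\<lambda>x. V (x, q)))"

locale product_gmdp =
  fixes t :: "'x::polish_space \<Rightarrow> 'u::polish_space \<Rightarrow> 'x measure"
    and h :: "'x \<Rightarrow> 'y::metric_space"
    and L :: "'y \<Rightarrow> 'ap::finite set"
    and \<tau> :: "'q::finite \<Rightarrow> 'ap set \<Rightarrow> 'q"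
    and F :: "'q set"
    and \<mu> :: "'x \<times> 'q \<Rightarrow> 'u measure"
  assumes kernel_prob: "\<And>x u. prob_space (t x u)"
    and kernel_sets: "\<And>x u. sets (t x u) = sets (borel :: 'x measure)"
    and kernel_meas: "(\<lambda>(x, u). t x u) \<in> (borel :: ('x \<times> 'u) measure) \<rightarrow>\<^sub>M prob_algebra borel"
    and h_meas: "h \<in> borel_measurable borel"
    and L_meas: "L \<in> (borel :: 'y measure) \<rightarrow>\<^sub>M count_space UNIV"
    and mu_prob: "\<And>x q. prob_space (\<mu> (x, q))"
    and mu_sets: "\<And>x q. sets (\<mu> (x, q)) = sets (borel :: 'u measure)"
    and mu_univ: "\<And>q. univ_measurable (prob_algebra (borel :: 'u measure)) (\<lambda>x. \<mu> (x, q))"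
begin

abbreviation "\<T> \<equiv> bellman t h L \<tau> F \<mu>"

definition dfa_next :: "'q \<Rightarrow> 'x \<Rightarrow> 'q" where
  "dfa_next q x' = \<tau> q (L (h x'))"

definition payoff :: "('x \<times> 'q \<Rightarrow> real) \<Rightarrow> 'q \<Rightarrow> 'x \<Rightarrow> real" where
  "payoff V q x' = max (indicator F (dfa_next q x')) (V (x', dfa_next q x'))"

definition next_distr :: "'x \<times> 'q \<Rightarrow> 'x measure" where
  "next_distr s = \<mu> s \<bind> t (fst s)"

definition bellman_nn :: "('x \<times> 'q \<Rightarrow> real) \<Rightarrow> 'x \<times> 'q \<Rightarrow> ennreal" where
  "bellman_nn V s = (\<integral>\<^sup>+ u. (\<integral>\<^sup>+ x'. ennreal (payoff V (snd s) x')
     \<partial>completion (t (fst s) u)) \<partial>completion (\<mu> s))"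

lemma bellman_eq_enn2real: "\<T> V s = enn2real (bellman_nn V s)"
  by (cases s) (simp add: bellman_def bellman_nn_def payoff_def dfa_next_def)

lemma payoff_nonneg: "0 \<le> payoff V q x'"
  unfolding payoff_def by (simp add: le_max_iff_disj)

lemma payoff_range: "(\<And>z. V z \<in> {0..1}) \<Longrightarrow> payoff V q x' \<in> {0..1}"
  unfolding payoff_def by (auto simp: indicator_def)

lemma bellman_nn_le_1:
  assumes "\<And>z. V z \<le> 1"
  shows "bellman_nn V s \<le> 1"
proof -
  interpret \<mu>: prob_space "completion (\<mu> s)"
    using mu_prob[of "fst s" "snd s"] by (simp add: prob_space.prob_space_completion)
  have "(\<integral>\<^sup>+ x'. ennreal (payoff V (snd s) x') \<partial>completion (t (fst s) u)) \<le> 1" for u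
  proof -
    interpret t: prob_space "completion (t (fst s) u)"
      using kernel_prob by (rule prob_space.prob_space_completion)
    show ?thesis using assms
      by (intro t.nn_integral_le_const AE_I2) (auto simp: payoff_def indicator_def)
  qed
  then show ?thesis
    unfolding bellman_nn_def by (intro \<mu>.nn_integral_le_const AE_I2) auto
qed

lemma bellman_le_1: "(\<And>z. V z \<le> 1) \<Longrightarrow> \<T> V s \<le> 1"
  using bellman_nn_le_1 by (simp add: bellman_eq_enn2real enn2real_leI)

lemma bellman_mono:
  assumes "\<And>z. V z \<le> 1" and "\<And>z. W z \<le> V z"
  shows "\<T> W s \<le> \<T> V s"
proof -
  have "bellman_nn W s \<le> bellman_nn V s"
    unfolding bellman_nn_def payoff_def using assms(2)
    by (intro nn_integral_mono ennreal_leI max.mono order.refl)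
  moreover have "bellman_nn V s < \<infinity>"
    using bellman_nn_le_1[of V s] assms(1) by (simp add: order.strict_trans1)
  ultimately show ?thesis
    by (simp add: bellman_eq_enn2real enn2real_mono)
qed

lemma kernel_measurable: "t x \<in> (borel :: 'u measure) \<rightarrow>\<^sub>M prob_algebra borel"
proof -
  have "(\<lambda>u. (x, u)) \<in> (borel :: 'u measure) \<rightarrow>\<^sub>M (borel \<Otimes>\<^sub>M borel)"
    by measurable
  then have "(\<lambda>u. (x, u)) \<in> (borel :: 'u measure) \<rightarrow>\<^sub>M (borel :: ('x \<times> 'u) measure)"
    by (simp add: borel_prod)
  from measurable_compose[OF this kernel_meas] show ?thesis by simp
qed

lemma mu_space: "\<mu> s \<in> space (prob_algebra borel)"
  using mu_prob mu_sets by (cases s) (auto simp: space_prob_algebra)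

lemma kernel_measurable_mu: "t x \<in> \<mu> s \<rightarrow>\<^sub>M prob_algebra borel"
  using kernel_measurable by (cases s) (simp add: mu_sets cong: measurable_cong_sets)

lemma next_distr_prob: "prob_space (next_distr s)"
  unfolding next_distr_def by (rule prob_space_bind'[OF mu_space kernel_measurable])

lemma next_distr_sets: "sets (next_distr s) = sets borel"
  unfolding next_distr_def by (rule sets_bind'[OF mu_space kernel_measurable])

lemma next_distr_measurable:
  assumes "prob_space P" and P_sets: "sets P = sets (borel :: 'x measure)"
  shows "(\<lambda>x. next_distr (x, q)) \<in> completion P \<rightarrow>\<^sub>M prob_algebra borel"
proof -
  have mu: "(\<lambda>x. \<mu> (x, q)) \<in> completion P \<rightarrow>\<^sub>M prob_algebra borel"
    using mu_univ assms by (rule univ_measurableD)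
  have "(\<lambda>x. x) \<in> completion P \<rightarrow>\<^sub>M (borel :: 'x measure)"
    by (rule measurable_completion) (simp add: P_sets cong: measurable_cong_sets)
  then have "(\<lambda>p. (fst p, snd p)) \<in> (completion P \<Otimes>\<^sub>M (borel :: 'u measure)) \<rightarrow>\<^sub>M (borel \<Otimes>\<^sub>M borel)"
    by (intro measurable_Pair measurable_compose[OF measurable_fst] measurable_snd)
  then have "(\<lambda>p. p) \<in> (completion P \<Otimes>\<^sub>M (borel :: 'u measure)) \<rightarrow>\<^sub>M (borel :: ('x \<times> 'u) measure)"
    by (simp add: borel_prod)
  from measurable_compose[OF this kernel_meas]
  have "(\<lambda>(x, u). t x u) \<in> (completion P \<Otimes>\<^sub>M (borel :: 'u measure)) \<rightarrow>\<^sub>M prob_algebra borel" .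
  from measurable_bind_prob_space2[OF mu this] show ?thesis
    unfolding next_distr_def by simp
qed

lemma dfa_next_measurable:
  assumes "sets N = sets (borel :: 'x measure)"
  shows "dfa_next q \<in> completion N \<rightarrow>\<^sub>M count_space UNIV"
proof -
  have "(\<lambda>x'. L (h x')) \<in> (borel :: 'x measure) \<rightarrow>\<^sub>M count_space UNIV"
    using h_meas L_meas by (rule measurable_compose)
  then have "dfa_next q \<in> (borel :: 'x measure) \<rightarrow>\<^sub>M count_space UNIV"
    unfolding dfa_next_def by (rule measurable_compose) simp
  then show ?thesis
    by (intro measurable_completion) (simp add: measurable_cong_sets[OF assms refl])
qed

lemma univ_measurable_payoff:
  assumes "univ_measurable_value V"
  shows "univ_measurable borel (payoff V q)"
  unfolding univ_measurable_def
proof (intro allI impI)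
  fix N :: "'x measure" assume "prob_space N \<and> sets N = sets borel"
  then have N: "prob_space N" "sets N = sets borel" by auto
  have "(\<lambda>x. V (x, q')) \<in> borel_measurable (completion N)" for q'
    using assms univ_measurableD[OF _ N] unfolding univ_measurable_value_def by blast
  then have "(\<lambda>x'. V (x', dfa_next q x')) \<in> borel_measurable (completion N)"
    by (rule measurable_compose_countable'[where I=UNIV, OF _ dfa_next_measurable[OF N(2)]]) simp
  moreover have "(\<lambda>x'. indicator F (dfa_next q x') :: real) \<in> borel_measurable (completion N)"
    by (rule measurable_compose[OF dfa_next_measurable[OF N(2)]]) simp
  ultimately show "payoff V q \<in> borel_measurable (completion N)"
    unfolding payoff_def by (rule borel_measurable_max)
qed

lemma payoff_measurable:
  "univ_measurable_value V \<Longrightarrow> payoff V q \<in> borel_measurable (completion (next_distr s))"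
  using univ_measurable_payoff next_distr_prob next_distr_sets by (rule univ_measurableD)

lemma payoff_integrable:
  assumes "univ_measurable_value V" and "\<And>z. V z \<in> {0..1}"
  shows "integrable (completion (next_distr s)) (payoff V q)"
proof -
  interpret prob_space "completion (next_distr s)"
    using next_distr_prob by (rule prob_space.prob_space_completion)
  show ?thesis
    using payoff_measurable[OF assms(1)] payoff_range[OF assms(2)]
    by (intro integrable_const_bound[where B=1]) auto
qed

lemma bellman_nn_eq_nn_integral:
  assumes "univ_measurable_value V"
  shows "bellman_nn V s = (\<integral>\<^sup>+ x'. ennreal (payoff V (snd s) x') \<partial>completion (next_distr s))"
proof (cases s)
  case (Pair x q)
  have "univ_measurable borel (\<lambda>x'. ennreal (payoff V q x'))"
    using univ_measurable_payoff[OF assms] measurable_ennreal by (rule univ_measurable_compose)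
  from nn_integral_completion_bind[OF mu_prob kernel_measurable_mu this] show ?thesis
    by (simp add: Pair bellman_nn_def next_distr_def)
qed

lemma bellman_eq_integral:
  assumes "univ_measurable_value V"
  shows "\<T> V s = (\<integral> x'. payoff V (snd s) x' \<partial>completion (next_distr s))"
  unfolding bellman_eq_enn2real bellman_nn_eq_nn_integral[OF assms]
  by (rule enn2real_nn_integral_eq_integral[where g="payoff V (snd s)"])
     (simp_all add: payoff_nonneg payoff_measurable[OF assms])

lemma univ_measurable_bellman:
  assumes "univ_measurable_value V"
  shows "univ_measurable_value (\<T> V)"
  unfolding univ_measurable_value_def univ_measurable_def
proof (intro allI impI)
  fix q and P :: "'x measure" assume "prob_space P \<and> sets P = sets borel"
  then have P: "prob_space P" "sets P = sets borel" by auto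
  have "univ_measurable borel (\<lambda>x'. ennreal (payoff V q x'))"
    using univ_measurable_payoff[OF assms] measurable_ennreal by (rule univ_measurable_compose)
  from measurable_nn_integral_completion_kernel[OF P(1) next_distr_measurable[OF P] this]
  have "(\<lambda>x. bellman_nn V (x, q)) \<in> borel_measurable (completion P)"
    by (simp add: bellman_nn_eq_nn_integral[OF assms])
  then show "(\<lambda>x. \<T> V (x, q)) \<in> borel_measurable (completion P)"
    unfolding bellman_eq_enn2real by (rule borel_measurable_enn2real)
qed

lemma bellman_excess_le:
  assumes V: "univ_measurable_value V" "\<And>z. V z \<in> {0..1}"
    and W: "univ_measurable_value W" "\<And>z. W z \<in> {0..1}"
    and "\<alpha> \<le> M" and M: "\<And>z. V z - W z + \<alpha> * V z \<le> M"
  shows "\<T> V s - \<T> W s + \<alpha> * \<T> V s \<le> M"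
proof -
  let ?N = "completion (next_distr s)" and ?q = "snd s"
  interpret prob_space ?N
    using next_distr_prob by (rule prob_space.prob_space_completion)
  have int_V: "integrable ?N (payoff V ?q)" and int_W: "integrable ?N (payoff W ?q)"
    using payoff_integrable V W by blast+
  have "\<T> V s - \<T> W s + \<alpha> * \<T> V s
      = (\<integral> y. payoff V ?q y - payoff W ?q y + \<alpha> * payoff V ?q y \<partial>?N)"
    unfolding bellman_eq_integral[OF V(1)] bellman_eq_integral[OF W(1)]
    using int_V int_W by (simp add: Bochner_Integration.integral_add Bochner_Integration.integral_diff)
  also have "\<dots> \<le> (\<integral> y. M \<partial>?N)"
    \<comment> \<open>the integrand is \<open>\<alpha>\<close> at accepting successors and the excess at the successor otherwise\<close>
  proof (rule integral_mono)
    show "integrable ?N (\<lambda>y. payoff V ?q y - payoff W ?q y + \<alpha> * payoff V ?q y)"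
      using int_V int_W by simp
    show "payoff V ?q y - payoff W ?q y + \<alpha> * payoff V ?q y \<le> M" for y
    proof (cases "dfa_next ?q y \<in> F")
      case True
      then show ?thesis
        using V(2)[of "(y, dfa_next ?q y)"] W(2)[of "(y, dfa_next ?q y)"] \<open>\<alpha> \<le> M\<close>
        by (simp add: payoff_def)
    next
      case False
      then show ?thesis
        using M[of "(y, dfa_next ?q y)"] V(2)[of "(y, dfa_next ?q y)"] W(2)[of "(y, dfa_next ?q y)"]
        by (simp add: payoff_def)
    qed
  qed simp
  also have "\<dots> = M"
    using next_distr_prob by (simp add: prob_space.prob_space)
  finally show ?thesis .
qed

end

locale robust_product_gmdp = product_gmdp t h L \<tau> F \<mu>
  for t :: "'x::polish_space \<Rightarrow> 'u::polish_space \<Rightarrow> 'x measure"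
    and h :: "'x \<Rightarrow> 'y::metric_space"
    and L :: "'y \<Rightarrow> 'ap::finite set"
    and \<tau> :: "'q::finite \<Rightarrow> 'ap set \<Rightarrow> 'q"
    and F :: "'q set"
    and \<mu> :: "'x \<times> 'q \<Rightarrow> 'u measure" +
  fixes \<delta> :: real
  assumes delta_nonneg: "\<delta> \<ge> 0"
begin

abbreviation "\<T>\<^sub>\<delta> \<equiv> robust_bellman t h L \<tau> F \<mu> \<delta>"

lemma robust_bellman_range: "\<T>\<^sub>\<delta> V s \<in> {0..1}"
  unfolding robust_bellman_def by (rule clip01_range)

lemma robust_bellman_mono:
  assumes "\<And>z. V z \<le> 1" and "\<And>z. W z \<le> V z"
  shows "\<T>\<^sub>\<delta> W s \<le> \<T>\<^sub>\<delta> V s"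
  unfolding robust_bellman_def using bellman_mono[OF assms] by (intro clip01_mono) simp

lemma univ_measurable_robust_bellman:
  assumes "univ_measurable_value V"
  shows "univ_measurable_value (\<T>\<^sub>\<delta> V)"
proof -
  have "(\<lambda>r. clip01 (r - \<delta>)) \<in> borel_measurable borel"
    unfolding clip01_def by measurable
  then show ?thesis
    using univ_measurable_bellman[OF assms] univ_measurable_compose
    unfolding univ_measurable_value_def robust_bellman_def by blast
qed

definition value_iter :: "nat \<Rightarrow> 'x \<times> 'q \<Rightarrow> real" where
  "value_iter l = (\<T>\<^sub>\<delta> ^^ l) (\<lambda>_. 0)"

lemma value_iter_Suc: "value_iter (Suc l) = \<T>\<^sub>\<delta> (value_iter l)"
  unfolding value_iter_def by simp

lemma value_iter_range: "value_iter l s \<in> {0..1}"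
proof (cases l)
  case (Suc k)
  show ?thesis unfolding Suc value_iter_Suc by (rule robust_bellman_range)
qed (simp add: value_iter_def)

lemma incseq_value_iter: "incseq (\<lambda>l. value_iter l s)"
proof (rule incseq_SucI)
  show "value_iter l s \<le> value_iter (Suc l) s" for l
  proof (induction l arbitrary: s)
    case 0
    show ?case using value_iter_range[of 1 s] by (simp add: value_iter_def)
  next
    case (Suc l)
    have "\<T>\<^sub>\<delta> (value_iter l) s \<le> \<T>\<^sub>\<delta> (value_iter (Suc l)) s"
      using value_iter_range[of "Suc l"] Suc by (intro robust_bellman_mono) auto
    then show ?case by (metis value_iter_Suc)
  qed
qed

lemma univ_measurable_value_iter: "univ_measurable_value (value_iter l)"
proof (induction l)
  case 0
  show ?case by (simp add: value_iter_def univ_measurable_value_def univ_measurable_def)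
next
  case (Suc l)
  then show ?case unfolding value_iter_Suc by (rule univ_measurable_robust_bellman)
qed

definition value_lim :: "'x \<times> 'q \<Rightarrow> real" where
  "value_lim s = lim (\<lambda>l. value_iter l s)"

lemma value_iter_tendsto: "(\<lambda>l. value_iter l s) \<longlonglongrightarrow> value_lim s"
proof -
  have "bdd_above (range (\<lambda>l. value_iter l s))"
    using value_iter_range[of _ s] by (auto intro!: bdd_aboveI[where M=1])
  then have "convergent (\<lambda>l. value_iter l s)"
    using incseq_value_iter by (blast intro: LIMSEQ_incseq_SUP convergentI)
  then show ?thesis
    unfolding value_lim_def by (rule convergent_LIMSEQ_iff[THEN iffD1])
qed

lemma value_lim_range: "value_lim s \<in> {0..1}"
proof -
  have "0 \<le> value_lim s"
    by (rule LIMSEQ_le_const[OF value_iter_tendsto]) (use value_iter_range[of _ s] in auto)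
  moreover have "value_lim s \<le> 1"
    by (rule LIMSEQ_le_const2[OF value_iter_tendsto]) (use value_iter_range[of _ s] in auto)
  ultimately show ?thesis by simp
qed

lemma univ_measurable_value_lim: "univ_measurable_value value_lim"
  unfolding univ_measurable_value_def univ_measurable_def
proof (intro allI impI)
  fix q and P :: "'x measure" assume P: "prob_space P \<and> sets P = sets borel"
  show "(\<lambda>x. value_lim (x, q)) \<in> borel_measurable (completion P)"
  proof (rule borel_measurable_LIMSEQ_real)
    show "(\<lambda>l. value_iter l (x, q)) \<longlonglongrightarrow> value_lim (x, q)" for x
      by (rule value_iter_tendsto)
    show "(\<lambda>x. value_iter l (x, q)) \<in> borel_measurable (completion P)" for l
      using univ_measurable_value_iter[of l] P univ_measurableD
      unfolding univ_measurable_value_def by blast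
  qed
qed

lemma value_lim_fixpoint: "\<T>\<^sub>\<delta> value_lim = value_lim"
proof
  fix s :: "'x \<times> 'q"
  let ?N = "completion (next_distr s)" and ?q = "snd s"
  interpret prob_space ?N
    using next_distr_prob by (rule prob_space.prob_space_completion)
  have "(\<lambda>l. \<integral> y. payoff (value_iter l) ?q y \<partial>?N) \<longlonglongrightarrow> (\<integral> y. payoff value_lim ?q y \<partial>?N)"
  proof (rule integral_dominated_convergence[where w="\<lambda>_. 1"])
    show "payoff value_lim ?q \<in> borel_measurable ?N"
      by (rule payoff_measurable[OF univ_measurable_value_lim])
    show "payoff (value_iter l) ?q \<in> borel_measurable ?N" for l
      by (rule payoff_measurable[OF univ_measurable_value_iter])
    show "AE y in ?N. (\<lambda>l. payoff (value_iter l) ?q y) \<longlonglongrightarrow> payoff value_lim ?q y"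
      unfolding payoff_def by (intro AE_I2 tendsto_max tendsto_const value_iter_tendsto)
    show "AE y in ?N. norm (payoff (value_iter l) ?q y) \<le> 1" for l
      using payoff_range[OF value_iter_range] by (intro AE_I2) auto
  qed simp
  then have "(\<lambda>l. \<T>\<^sub>\<delta> (value_iter l) s) \<longlonglongrightarrow> \<T>\<^sub>\<delta> value_lim s"
    unfolding robust_bellman_def clip01_def
      bellman_eq_integral[OF univ_measurable_value_iter] bellman_eq_integral[OF univ_measurable_value_lim]
    by (intro tendsto_min tendsto_max tendsto_const tendsto_diff)
  then have "(\<lambda>l. value_iter (Suc l) s) \<longlonglongrightarrow> \<T>\<^sub>\<delta> value_lim s"
    by (simp add: value_iter_Suc)
  moreover have "(\<lambda>l. value_iter (Suc l) s) \<longlonglongrightarrow> value_lim s"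
    by (rule LIMSEQ_Suc[OF value_iter_tendsto])
  ultimately show "\<T>\<^sub>\<delta> value_lim s = value_lim s"
    by (rule LIMSEQ_unique)
qed

lemma value_lim_least_fixpoint:
  assumes V: "\<And>z. V z \<in> {0..1}" and fixpoint: "\<T>\<^sub>\<delta> V = V"
  shows "value_lim s \<le> V s"
proof -
  have "value_iter l z \<le> V z" for l z
  proof (induction l arbitrary: z)
    case 0
    show ?case using V by (simp add: value_iter_def)
  next
    case (Suc l)
    have "\<T>\<^sub>\<delta> (value_iter l) z \<le> \<T>\<^sub>\<delta> V z"
      using V Suc by (intro robust_bellman_mono) auto
    then show ?case by (simp add: value_iter_Suc fixpoint)
  qed
  then show ?thesis
    by (intro LIMSEQ_le_const2[OF value_iter_tendsto]) blast
qed

lemma robust_bellman_fixpoints_eq: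
  assumes "\<delta> > 0"
    and V: "univ_measurable_value V" "\<And>z. V z \<in> {0..1}" "\<T>\<^sub>\<delta> V = V"
    and W: "univ_measurable_value W" "\<And>z. W z \<in> {0..1}" "\<T>\<^sub>\<delta> W = W"
    and W_le_V: "\<And>z. W z \<le> V z"
  shows "V = W"
proof (rule ccontr)
  assume "V \<noteq> W"
  then obtain s0 where "V s0 \<noteq> W s0" by (auto simp: fun_eq_iff)
  with W_le_V[of s0] have s0: "W s0 < V s0" by simp
  define d where "d = (SUP z. V z - W z)"
  define \<Phi> where "\<Phi> z = V z - W z + d * V z" for z
  define M where "M = (SUP z. \<Phi> z)"
  have excess_le_1: "V z - W z \<le> 1" for z
    using V(2)[of z] W(2)[of z] by simp
  have "V s0 - W s0 \<le> d"
    unfolding d_def using excess_le_1 by (intro cSUP_upper bdd_aboveI2) auto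
  with s0 have d_pos: "0 < d" by simp
  have "\<Phi> z \<le> 1 + d" for z
  proof -
    have "d * V z \<le> d" using V(2)[of z] d_pos by (simp add: mult_left_le)
    then show ?thesis using excess_le_1[of z] by (simp add: \<Phi>_def)
  qed
  then have \<Phi>_le_M: "\<Phi> z \<le> M" for z
    unfolding M_def by (intro cSUP_upper bdd_aboveI2) auto
  have M_least: "M \<le> c" if "\<And>z. \<Phi> z \<le> c" for c
    unfolding M_def using that by (rule cSUP_least[rotated]) simp
  have d_le_M: "d \<le> M"
    unfolding d_def
  proof (rule cSUP_least)
    fix z
    have "0 \<le> d * V z" using V(2)[of z] d_pos by simp
    then show "V z - W z \<le> M" using \<Phi>_le_M[of z] by (simp add: \<Phi>_def)
  qed simp
  have "\<Phi> s \<le> max 0 (M - d * \<delta>)" for s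
  proof (cases "V s = 0")
    case True
    then show ?thesis using W(2)[of s] W_le_V[of s] by (simp add: \<Phi>_def)
  next
    case False
    have fix_V: "clip01 (\<T> V s - \<delta>) = V s" and fix_W: "clip01 (\<T> W s - \<delta>) = W s"
      using fun_cong[OF V(3), of s] fun_cong[OF W(3), of s] unfolding robust_bellman_def by auto
    with False V(2)[of s] have V_le: "V s \<le> \<T> V s - \<delta>"
      using clip01_le[of "\<T> V s - \<delta>"] by simp
    have "\<T> W s - \<delta> \<le> 1"
      using bellman_le_1[of W s] W(2) delta_nonneg by simp
    then have W_ge: "\<T> W s - \<delta> \<le> W s"
      using clip01_ge fix_W by metis
    have "d * V s \<le> d * (\<T> V s - \<delta>)"
      using V_le d_pos by (simp add: mult_left_mono)
    with V_le W_ge have "\<Phi> s \<le> \<T> V s - \<T> W s + d * \<T> V s - d * \<delta>"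
      by (simp add: \<Phi>_def right_diff_distrib)
    also have "\<dots> \<le> M - d * \<delta>"
      using bellman_excess_le[OF V(1,2) W(1,2) d_le_M, of s] \<Phi>_le_M by (simp add: \<Phi>_def)
    finally show ?thesis by simp
  qed
  then have "M \<le> max 0 (M - d * \<delta>)" by (rule M_least)
  moreover have "0 < d * \<delta>" using d_pos \<open>\<delta> > 0\<close> by simp
  ultimately show False
    using d_le_M d_pos by (simp add: max_def split: if_splits)
qed

lemma robust_bellman_fixpoint_unique:
  assumes "\<delta> > 0" and "univ_measurable_value V" "\<And>z. V z \<in> {0..1}" "\<T>\<^sub>\<delta> V = V"
  shows "V = value_lim"
  by (rule robust_bellman_fixpoints_eq[OF assms univ_measurable_value_lim value_lim_range
        value_lim_fixpoint value_lim_least_fixpoint[OF assms(3,4)]])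

end

theorem lemma1:
  fixes t :: "'x::polish_space \<Rightarrow> 'u::polish_space \<Rightarrow> 'x measure"
    and h :: "'x \<Rightarrow> 'y::metric_space"
    and L :: "'y \<Rightarrow> 'ap::finite set"
    and \<tau> :: "'q::finite \<Rightarrow> 'ap set \<Rightarrow> 'q"
    and F :: "'q set"
    and \<mu> :: "'x \<times> 'q \<Rightarrow> 'u measure"
    and \<delta> :: real
  assumes kernel_prob: "\<And>x u. prob_space (t x u)"
    and kernel_sets: "\<And>x u. sets (t x u) = sets (borel :: 'x measure)"
    and kernel_meas: "(\<lambda>(x, u). t x u) \<in> (borel :: ('x \<times> 'u) measure) \<rightarrow>\<^sub>M prob_algebra borel"
    and h_meas: "h \<in> borel_measurable borel"
    and L_meas: "L \<in> (borel :: 'y measure) \<rightarrow>\<^sub>M count_space UNIV"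
    and delta_nonneg: "\<delta> \<ge> 0"
    and mu_prob: "\<And>x q. prob_space (\<mu> (x, q))"
    and mu_sets: "\<And>x q. sets (\<mu> (x, q)) = sets (borel :: 'u measure)"
    and mu_univ: "\<And>q. univ_measurable (prob_algebra (borel :: 'u measure)) (\<lambda>x. \<mu> (x, q))"
  defines "T \<equiv> robust_bellman t h L \<tau> F \<mu> \<delta>"
  shows
    "(\<forall>V W. (\<forall>s. V s \<in> {0..1}) \<longrightarrow> (\<forall>s. W s \<in> {0..1}) \<longrightarrow> (\<forall>s. W s \<le> V s)
        \<longrightarrow> (\<forall>s. T W s \<le> T V s))
     \<and> (\<forall>s. incseq (\<lambda>l. (T ^^ l) (\<lambda>_. 0) s) \<and> convergent (\<lambda>l. (T ^^ l) (\<lambda>_. 0) s))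
     \<and> (\<delta> > 0 \<longrightarrow>
        (let Vinf = (\<lambda>s. lim (\<lambda>l. (T ^^ l) (\<lambda>_. 0) s)) in
          (\<forall>s. Vinf s \<in> {0..1}) \<and> (\<forall>q. univ_measurable borel (\<lambda>x. Vinf (x, q))) \<and> T Vinf = Vinf
          \<and> (\<forall>V. (\<forall>s. V s \<in> {0..1}) \<longrightarrow> (\<forall>q. univ_measurable borel (\<lambda>x. V (x, q)))
                 \<longrightarrow> T V = V \<longrightarrow> V = Vinf)))"
proof -
  interpret robust_product_gmdp t h L \<tau> F \<mu> \<delta>
    using product_gmdp.intro[OF kernel_prob kernel_sets kernel_meas h_meas L_meas mu_prob mu_sets mu_univ]
      delta_nonneg by (intro robust_product_gmdp.intro robust_product_gmdp_axioms.intro)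
  have iter: "(T ^^ l) (\<lambda>_. 0) = value_iter l" for l
    by (simp add: T_def value_iter_def)
  have lim: "(\<lambda>s. lim (\<lambda>l. value_iter l s)) = value_lim"
    by (simp add: value_lim_def fun_eq_iff)
  show ?thesis
    unfolding iter lim Let_def
  proof (intro conjI allI impI)
    show "T W s \<le> T V s"
      if "\<forall>s. V s \<in> {0..1}" "\<forall>s. W s \<le> V s" for V W :: "'x \<times> 'q \<Rightarrow> real" and s
      using that unfolding T_def by (intro robust_bellman_mono) auto
    show "incseq (\<lambda>l. value_iter l s)" for s
      by (rule incseq_value_iter)
    show "convergent (\<lambda>l. value_iter l s)" for s
      using value_iter_tendsto by (rule convergentI)
    show "value_lim s \<in> {0..1}" for s
      by (rule value_lim_range)
    show "univ_measurable borel (\<lambda>x. value_lim (x, q))" for q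
      using univ_measurable_value_lim unfolding univ_measurable_value_def by blast
    show "T value_lim = value_lim"
      unfolding T_def by (rule value_lim_fixpoint)
    show "V = value_lim"
      if "0 < \<delta>" "\<forall>s. V s \<in> {0..1}" "\<forall>q. univ_measurable borel (\<lambda>x. V (x, q))" "T V = V"
      for V
      using that unfolding T_def univ_measurable_value_def[symmetric]
      by (intro robust_bellman_fixpoint_unique) auto
  qed
qed

end
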